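(* Let $F$ be a minimally unsatisfiable clause-set, $v$ an $m$-singular variable for $F$ ($m\ge1$), and $F' := \mathrm{DP}_v(F)$. 1. (a) If $m\ge2$, then $\mathrm{var}_s(F')\subseteq\mathrm{var}_s(F)$ and $\mathrm{var}_{1s}(F')\subseteq\mathrm{var}_{1s}(F)$. (b) If $m=1$, then $\mathrm{var}_{1s}(F')\setminus\mathrm{var}_{1s}(F)\subseteq\mathrm{var}_{\neg1s}(F)$. 2. (a) If $m=1$, then $\mathrm{var}_s(F)\setminus\{v\}\subseteq\mathrm{var}_s(F')$ and $\mathrm{var}_{1s}(F)\setminus\{v\}\subseteq\mathrm{var}_{1s}(F')$. (b) If $m\ge2$, then $\mathrm{var}_s(F)\setminus\mathrm{var}_s(F')\subseteq\mathrm{var}_{\neg1s}(F)$.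
   Context: Literals are variables $v$ and complements $\overline{v}$; a clause is a finite set of literals with no complementary pair; a clause-set is a finite set of clauses; $\mathrm{ldeg}_F(x)$ is the number of clauses of $F$ containing literal $x$, $\mathrm{vdeg}_F(v)=\mathrm{ldeg}_F(v)+\mathrm{ldeg}_F(\overline{v})$. $\mathrm{DP}_v(F) := \{C \in F : v \notin \mathrm{var}(C)\} \cup \{(C \cup D)\setminus\{v,\overline{v}\} : C, D \in F,\ C \cap \overline{D} = \{v\}\}$. A variable $v$ is singular for $F$ if $\min(\mathrm{ldeg}_F(v),\mathrm{ldeg}_F(\overline{v}))=1$, and $m$-singular if additionally $\mathrm{vdeg}_F(v)-1=m$. $\mathrm{var}_s(F)$ is the set of singular variables of $F$; $\mathrm{var}_{1s}(F):=\{v:\mathrm{ldeg}_F(v)=\mathrm{ldeg}_F(\overline{v})=1\}$ is the set of 1-singular variables; $\mathrm{var}_{\neg1s}(F):=\mathrm{var}_s(F)\setminus\mathrm{var}_{1s}(F)$ is the set of non-1-singular variables. *)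

theory Defs
  imports Main
begin

datatype 'v lit = Pos 'v | Neg 'v

fun comp :: "'v lit \<Rightarrow> 'v lit" where
  "comp (Pos v) = Neg v"
| "comp (Neg v) = Pos v"

fun var_of :: "'v lit \<Rightarrow> 'v" where
  "var_of (Pos v) = v"
| "var_of (Neg v) = v"

type_synonym 'v clause = "'v lit set"
type_synonym 'v cls = "'v clause set"

definition comp_set :: "'v clause \<Rightarrow> 'v clause" where
  "comp_set C = comp ` C"

definition is_clause :: "'v clause \<Rightarrow> bool" where
  "is_clause C \<longleftrightarrow> finite C \<and> (\<forall>x\<in>C. comp x \<notin> C)"

definition is_clause_set :: "'v cls \<Rightarrow> bool" where
  "is_clause_set F \<longleftrightarrow> finite F \<and> (\<forall>C\<in>F. is_clause C)"

definition vars :: "'v clause \<Rightarrow> 'v set" where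
  "vars C = var_of ` C"

fun lit_val :: "('v \<Rightarrow> bool) \<Rightarrow> 'v lit \<Rightarrow> bool" where
  "lit_val \<phi> (Pos v) = \<phi> v"
| "lit_val \<phi> (Neg v) = (\<not> \<phi> v)"

definition satisfiable :: "'v cls \<Rightarrow> bool" where
  "satisfiable F \<longleftrightarrow> (\<exists>\<phi>. \<forall>C\<in>F. \<exists>x\<in>C. lit_val \<phi> x)"

definition minimally_unsat :: "'v cls \<Rightarrow> bool" where
  "minimally_unsat F \<longleftrightarrow> is_clause_set F \<and> \<not> satisfiable F \<and>
     (\<forall>C\<in>F. satisfiable (F - {C}))"

definition ldeg :: "'v cls \<Rightarrow> 'v lit \<Rightarrow> nat" where
  "ldeg F x = card {C \<in> F. x \<in> C}"

definition vdeg :: "'v cls \<Rightarrow> 'v \<Rightarrow> nat" where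
  "vdeg F v = ldeg F (Pos v) + ldeg F (Neg v)"

definition DP :: "'v \<Rightarrow> 'v cls \<Rightarrow> 'v cls" where
  "DP v F = {C \<in> F. v \<notin> vars C} \<union>
     {(C \<union> D) - {Pos v, Neg v} | C D. C \<in> F \<and> D \<in> F \<and> C \<inter> comp_set D = {Pos v}}"

definition singular :: "'v cls \<Rightarrow> 'v \<Rightarrow> bool" where
  "singular F v \<longleftrightarrow> min (ldeg F (Pos v)) (ldeg F (Neg v)) = 1"

definition m_singular :: "nat \<Rightarrow> 'v cls \<Rightarrow> 'v \<Rightarrow> bool" where
  "m_singular m F v \<longleftrightarrow> singular F v \<and> vdeg F v - 1 = m"

definition var_s :: "'v cls \<Rightarrow> 'v set" where
  "var_s F = {v. singular F v}"

definition var_1s :: "'v cls \<Rightarrow> 'v set" where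
  "var_1s F = {v. ldeg F (Pos v) = 1 \<and> ldeg F (Neg v) = 1}"

definition var_n1s :: "'v cls \<Rightarrow> 'v set" where
  "var_n1s F = var_s F - var_1s F"

end

theory Submission
  imports Defs
begin

text \<open>Let x be the literal of v that occurs only once, in the clause C0, and let D1, ..., Dm be
  the clauses containing its complement. DP elimination preserves satisfiability in both
  directions; hence, F being minimally unsatisfiable, no resolvent of C0 with some Di can be
  obtained without Di. So C0 clashes with each Di only in x, and the m resolvents are pairwise
  distinct and distinct from the clauses of F not mentioning v. Counting occurrences, a literal
  outside C0 keeps its degree, while a literal of C0 lying in b of the Di (b \<le> m) passes from
  degree a + 1 + b to a + m. All four inclusions follow arithmetically.\<close>

lemma comp_comp [simp]: "comp (comp y) = y"
  by (cases y) auto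

lemma var_of_comp [simp]: "var_of (comp y) = var_of y"
  by (cases y) auto

lemma lit_val_comp [simp]: "lit_val \<phi> (comp y) \<longleftrightarrow> \<not> lit_val \<phi> y"
  by (cases y) auto

lemma var_of_eq_iff: "var_of z = var_of y \<longleftrightarrow> z = y \<or> z = comp y"
  by (cases y; cases z) auto

lemma in_comp_set_iff: "y \<in> comp_set D \<longleftrightarrow> comp y \<in> D"
  unfolding comp_set_def by (metis comp_comp image_iff)

lemma var_of_in_vars_iff: "var_of y \<in> vars C \<longleftrightarrow> y \<in> C \<or> comp y \<in> C"
  unfolding vars_def image_iff by (metis var_of_comp var_of_eq_iff)

lemma clash_singleton_swap: "D \<inter> comp_set C = {comp y} \<longleftrightarrow> C \<inter> comp_set D = {y}"
proof -
  have "D \<inter> comp_set C = comp ` (C \<inter> comp_set D)"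
  proof (intro equalityI subsetI)
    fix z assume "z \<in> D \<inter> comp_set C"
    then have "comp z \<in> C \<inter> comp_set D" by (simp add: in_comp_set_iff)
    then show "z \<in> comp ` (C \<inter> comp_set D)" by (metis comp_comp image_eqI)
  qed (auto simp: in_comp_set_iff)
  moreover have "comp ` S = comp ` {y} \<longleftrightarrow> S = {y}" for S
    by (rule inj_image_eq_iff) (metis comp_comp injI)
  ultimately show ?thesis by simp
qed

lemma clash_singletonD: "C \<inter> comp_set D = {y} \<Longrightarrow> y \<in> C \<and> comp y \<in> D"
  by (auto simp: in_comp_set_iff)

lemma clause_set_no_complement:
  "is_clause_set F \<Longrightarrow> C \<in> F \<Longrightarrow> y \<in> C \<Longrightarrow> comp y \<notin> C"
  unfolding is_clause_set_def is_clause_def by blast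

lemma satisfiable_subset: "satisfiable G \<Longrightarrow> H \<subseteq> G \<Longrightarrow> satisfiable H"
  unfolding satisfiable_def by blast

definition DP_lit :: "'v lit \<Rightarrow> 'v cls \<Rightarrow> 'v cls" where
  "DP_lit x F = {C \<in> F. var_of x \<notin> vars C} \<union>
     {(C \<union> D) - {x, comp x} | C D. C \<in> F \<and> D \<in> F \<and> C \<inter> comp_set D = {x}}"

lemma DP_eq_DP_lit:
  assumes "var_of x = v"
  shows "DP v F = DP_lit x F"
proof (cases x)
  case (Pos u)
  then show ?thesis using assms unfolding DP_def DP_lit_def by auto
next
  case (Neg u)
  have "{(C \<union> D) - {Pos v, Neg v} | C D. C \<in> F \<and> D \<in> F \<and> C \<inter> comp_set D = {Pos v}}
      = {(C \<union> D) - {Neg v, Pos v} | C D. C \<in> F \<and> D \<in> F \<and> C \<inter> comp_set D = {Neg v}}"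
    using clash_singleton_swap[of _ _ "Pos v"] by (auto simp: Un_commute)
  then show ?thesis using Neg assms unfolding DP_def DP_lit_def by simp
qed

definition models :: "('v \<Rightarrow> bool) \<Rightarrow> 'v cls \<Rightarrow> bool" where
  "models \<phi> F \<longleftrightarrow> (\<forall>C\<in>F. \<exists>y\<in>C. lit_val \<phi> y)"

lemma satisfiable_iff_models: "satisfiable F \<longleftrightarrow> (\<exists>\<phi>. models \<phi> F)"
  unfolding satisfiable_def models_def ..

lemma resolvent_satisfied:
  assumes "is_clause C" "is_clause D" "x \<in> C" "comp x \<in> D"
    and "\<exists>y\<in>C. lit_val \<phi> y" "\<exists>y\<in>D. lit_val \<phi> y"
  shows "\<exists>y \<in> (C \<union> D) - {x, comp x}. lit_val \<phi> y"
proof (cases "lit_val \<phi> x")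
  case True
  then obtain y where "y \<in> D" "lit_val \<phi> y" "y \<noteq> comp x" using assms(6) by force
  moreover have "y \<noteq> x" using assms(2,4) \<open>y \<in> D\<close> unfolding is_clause_def by force
  ultimately show ?thesis by blast
next
  case False
  then obtain y where "y \<in> C" "lit_val \<phi> y" "y \<noteq> x" using assms(5) by blast
  moreover have "y \<noteq> comp x" using assms(1,3) \<open>y \<in> C\<close> unfolding is_clause_def by blast
  ultimately show ?thesis by blast
qed

lemma satisfiable_DP_lit:
  assumes "is_clause_set G" "satisfiable G"
  shows "satisfiable (DP_lit x G)"
proof -
  obtain \<phi> where \<phi>: "models \<phi> G" using assms(2) by (auto simp: satisfiable_iff_models)
  have "\<exists>y\<in>E. lit_val \<phi> y" if "E \<in> DP_lit x G" for E
    using that unfolding DP_lit_def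
  proof (elim UnE CollectE exE conjE)
    fix C D assume "E = (C \<union> D) - {x, comp x}" "C \<in> G" "D \<in> G" "C \<inter> comp_set D = {x}"
    then show ?thesis
      using resolvent_satisfied[of C D x \<phi>] \<phi> assms(1) clash_singletonD[of C D x]
      unfolding models_def is_clause_set_def by blast
  qed (use \<phi> in \<open>auto simp: models_def\<close>)
  then show ?thesis by (auto simp: satisfiable_iff_models models_def)
qed

definition upd_lit :: "('v \<Rightarrow> bool) \<Rightarrow> 'v lit \<Rightarrow> bool \<Rightarrow> 'v \<Rightarrow> bool" where
  "upd_lit \<phi> x b = \<phi>(var_of x := (case x of Pos _ \<Rightarrow> b | Neg _ \<Rightarrow> \<not> b))"

lemma lit_val_upd_lit_self [simp]: "lit_val (upd_lit \<phi> x b) x = b"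
  by (cases x) (auto simp: upd_lit_def)

lemma lit_val_upd_lit_other:
  "var_of y \<noteq> var_of x \<Longrightarrow> lit_val (upd_lit \<phi> x b) y = lit_val \<phi> y"
  by (cases y; cases x) (auto simp: upd_lit_def)

lemma models_clause_without_var:
  assumes "models \<phi> (DP_lit x G)" "E \<in> G" "x \<notin> E" "comp x \<notin> E"
  shows "\<exists>y\<in>E. lit_val (upd_lit \<phi> x b) y"
proof -
  have "var_of x \<notin> vars E" using assms(3,4) by (simp add: var_of_in_vars_iff)
  then have "E \<in> DP_lit x G" using assms(2) unfolding DP_lit_def by blast
  then obtain y where "y \<in> E" "lit_val \<phi> y" using assms(1) unfolding models_def by blast
  moreover have "var_of y \<noteq> var_of x"
    using \<open>y \<in> E\<close> assms(3,4) by (auto simp: var_of_eq_iff)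
  ultimately show ?thesis using lit_val_upd_lit_other by metis
qed

lemma models_upd_lit_false:
  assumes G: "is_clause_set G" and \<phi>: "models \<phi> (DP_lit x G)"
    and other: "\<And>C. C \<in> G \<Longrightarrow> x \<in> C \<Longrightarrow> \<exists>y\<in>C. y \<noteq> x \<and> lit_val \<phi> y"
  shows "models (upd_lit \<phi> x False) G"
  unfolding models_def
proof
  fix E assume E: "E \<in> G"
  consider "x \<in> E" | "comp x \<in> E" | "x \<notin> E" "comp x \<notin> E" by blast
  then show "\<exists>y\<in>E. lit_val (upd_lit \<phi> x False) y"
  proof cases
    case 1
    then obtain y where "y \<in> E" "y \<noteq> x" "lit_val \<phi> y" using other E by blast
    moreover have "y \<noteq> comp x" using clause_set_no_complement[OF G E 1] \<open>y \<in> E\<close> by auto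
    ultimately show ?thesis using lit_val_upd_lit_other var_of_eq_iff by metis
  next
    case 2
    then show ?thesis by force
  qed (use models_clause_without_var[OF \<phi> E] in blast)
qed

lemma models_upd_lit_true:
  assumes G: "is_clause_set G" and \<phi>: "models \<phi> (DP_lit x G)"
    and C: "C \<in> G" "x \<in> C" and false: "\<And>y. y \<in> C \<Longrightarrow> y \<noteq> x \<Longrightarrow> \<not> lit_val \<phi> y"
  shows "models (upd_lit \<phi> x True) G"
  unfolding models_def
proof
  fix E assume E: "E \<in> G"
  consider "x \<in> E" | "comp x \<in> E" "C \<inter> comp_set E = {x}"
    | "comp x \<in> E" "C \<inter> comp_set E \<noteq> {x}" | "x \<notin> E" "comp x \<notin> E" by blast
  then show "\<exists>y\<in>E. lit_val (upd_lit \<phi> x True) y"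
  proof cases
    case 1
    then show ?thesis by force
  next
    case 2
    \<comment> \<open>the resolvent of C and E is satisfied by a literal of E, since C - {x} is false\<close>
    then have "(C \<union> E) - {x, comp x} \<in> DP_lit x G" using C(1) E unfolding DP_lit_def by blast
    then obtain y where y: "y \<in> (C \<union> E) - {x, comp x}" "lit_val \<phi> y"
      using \<phi> unfolding models_def by blast
    then have "y \<in> E" "var_of y \<noteq> var_of x" using false by (auto simp: var_of_eq_iff)
    then show ?thesis using y(2) lit_val_upd_lit_other by metis
  next
    case 3
    \<comment> \<open>a second clash between C and E makes a literal of E true already under \<phi>\<close>
    have "x \<in> C \<inter> comp_set E" using 3(1) C(2) by (simp add: in_comp_set_iff)
    then obtain y where "y \<in> C \<inter> comp_set E" "y \<noteq> x" using 3(2) by blast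
    then have y: "y \<in> C" "comp y \<in> E" "y \<noteq> x" by (auto simp: in_comp_set_iff)
    moreover have "y \<noteq> comp x" using clause_set_no_complement[OF G C] y(1) by auto
    ultimately have "var_of (comp y) \<noteq> var_of x" by (simp add: var_of_eq_iff)
    then show ?thesis using y false lit_val_upd_lit_other by (metis lit_val_comp)
  qed (use models_clause_without_var[OF \<phi> E] in blast)
qed

lemma satisfiable_of_DP_lit:
  assumes "is_clause_set G" "satisfiable (DP_lit x G)"
  shows "satisfiable G"
proof -
  obtain \<phi> where \<phi>: "models \<phi> (DP_lit x G)" using assms(2) by (auto simp: satisfiable_iff_models)
  show ?thesis
  proof (cases "\<forall>C\<in>G. x \<in> C \<longrightarrow> (\<exists>y\<in>C. y \<noteq> x \<and> lit_val \<phi> y)")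
    case True
    then show ?thesis
      using models_upd_lit_false[OF assms(1) \<phi>] by (auto simp: satisfiable_iff_models)
  next
    case False
    then obtain C where "C \<in> G" "x \<in> C" "\<And>y. y \<in> C \<Longrightarrow> y \<noteq> x \<Longrightarrow> \<not> lit_val \<phi> y" by blast
    then show ?thesis
      using models_upd_lit_true[OF assms(1) \<phi>] by (auto simp: satisfiable_iff_models)
  qed
qed

definition occurrences :: "'v cls \<Rightarrow> 'v lit \<Rightarrow> 'v cls" where
  "occurrences F y = {C \<in> F. y \<in> C}"

lemma occurrences_Un: "occurrences (A \<union> B) y = occurrences A y \<union> occurrences B y"
  unfolding occurrences_def by auto

lemma occurrences_subset: "occurrences A y \<subseteq> A"
  unfolding occurrences_def by auto

lemma finite_occurrences: "finite A \<Longrightarrow> finite (occurrences A y)"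
  unfolding occurrences_def by simp

lemma ldeg_eq_card_occurrences: "ldeg F y = card (occurrences F y)"
  unfolding ldeg_def occurrences_def ..

locale singular_literal =
  fixes F :: "'v cls" and x :: "'v lit" and C0 :: "'v clause"
  assumes minimally_unsat: "minimally_unsat F"
    and occurrences_x: "occurrences F x = {C0}"
begin

definition resolvent :: "'v clause \<Rightarrow> 'v clause" where
  "resolvent D = (C0 \<union> D) - {x, comp x}"

abbreviation untouched :: "'v cls" where
  "untouched \<equiv> {C \<in> F. var_of x \<notin> vars C}"

lemma clause_set: "is_clause_set F" and finite_clause_set: "finite F"
  using minimally_unsat unfolding minimally_unsat_def is_clause_set_def by auto

lemma C0_in: "C0 \<in> F" and x_in_C0: "x \<in> C0" and comp_x_notin_C0: "comp x \<notin> C0"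
  using occurrences_x clause_set_no_complement[OF clause_set]
  unfolding occurrences_def by blast+

lemma eq_C0: "C \<in> F \<Longrightarrow> x \<in> C \<Longrightarrow> C = C0"
  using occurrences_x unfolding occurrences_def by blast

text \<open>Otherwise every clause of DP_lit x F is already produced from F - {D}, and since DP
  elimination preserves satisfiability in both directions, F would inherit the satisfiability
  of F - {D}.\<close>
lemma resolvent_irredundant:
  assumes D: "D \<in> occurrences F (comp x)"
  shows "C0 \<inter> comp_set D = {x} \<and> resolvent D \<notin> DP_lit x (F - {D})"
proof (rule ccontr)
  assume irr: "\<not> ?thesis"
  have "D \<in> F" "comp x \<in> D" "D \<noteq> C0" using D comp_x_notin_C0 unfolding occurrences_def by auto
  have DP_subset: "DP_lit x F \<subseteq> DP_lit x (F - {D})"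
  proof
    fix E assume "E \<in> DP_lit x F"
    then consider "E \<in> F" "var_of x \<notin> vars E"
      | D' where "E = resolvent D'" "D' \<in> F" "C0 \<inter> comp_set D' = {x}"
      unfolding DP_lit_def resolvent_def using eq_C0 clash_singletonD by blast
    then show "E \<in> DP_lit x (F - {D})"
    proof cases
      case 1
      then have "E \<noteq> D" using \<open>comp x \<in> D\<close> by (auto simp: var_of_in_vars_iff)
      with 1 show ?thesis unfolding DP_lit_def by blast
    next
      case 2
      show ?thesis
      proof (cases "D' = D")
        case True
        then show ?thesis using 2 irr by blast
      next
        case False
        with 2 show ?thesis using C0_in \<open>D \<noteq> C0\<close> unfolding DP_lit_def resolvent_def by blast
      qed
    qed
  qed
  have "is_clause_set (F - {D})" using clause_set unfolding is_clause_set_def by auto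
  then have "satisfiable (DP_lit x (F - {D}))"
    using satisfiable_DP_lit minimally_unsat \<open>D \<in> F\<close> unfolding minimally_unsat_def by blast
  then have "satisfiable (DP_lit x F)" using DP_subset satisfiable_subset by blast
  then show False
    using satisfiable_of_DP_lit[OF clause_set] minimally_unsat unfolding minimally_unsat_def by blast
qed

abbreviation partners :: "'v cls" where
  "partners \<equiv> occurrences F (comp x)"

lemma finite_untouched: "finite untouched" and finite_partners: "finite partners"
  using finite_clause_set finite_occurrences by auto

lemma DP_lit_eq: "DP_lit x F = untouched \<union> resolvent ` partners"
proof (intro equalityI subsetI)
  fix E assume "E \<in> DP_lit x F"
  then consider "E \<in> untouched"
    | C D where "E = (C \<union> D) - {x, comp x}" "C \<in> F" "D \<in> F" "C \<inter> comp_set D = {x}"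
    unfolding DP_lit_def by blast
  then show "E \<in> untouched \<union> resolvent ` partners"
  proof cases
    case 2
    then have "C = C0" "D \<in> partners"
      using eq_C0 clash_singletonD[OF 2(4)] unfolding occurrences_def by auto
    then show ?thesis using 2(1) unfolding resolvent_def by blast
  qed blast
next
  fix E assume "E \<in> untouched \<union> resolvent ` partners"
  then consider "E \<in> untouched" | D where "D \<in> partners" "E = resolvent D" by blast
  then show "E \<in> DP_lit x F"
  proof cases
    case 2
    then have "C0 \<inter> comp_set D = {x}" "D \<in> F"
      using resolvent_irredundant occurrences_subset by blast+
    then show ?thesis using 2(2) C0_in unfolding DP_lit_def resolvent_def by blast
  qed (simp add: DP_lit_def)
qed

lemma untouched_resolvents_disjoint: "untouched \<inter> resolvent ` partners = {}"
proof -
  have "untouched \<subseteq> DP_lit x (F - {D})" if "D \<in> partners" for D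
    using that unfolding DP_lit_def occurrences_def by (auto simp: var_of_in_vars_iff)
  then show ?thesis using resolvent_irredundant by blast
qed

lemma inj_on_resolvent: "inj_on resolvent partners"
proof (rule inj_onI, rule ccontr)
  fix D D' assume D: "D \<in> partners" "D' \<in> partners" "resolvent D = resolvent D'" "D \<noteq> D'"
  have "D \<noteq> C0" using D(1) comp_x_notin_C0 unfolding occurrences_def by auto
  then have "resolvent D' \<in> DP_lit x (F - {D})"
    using resolvent_irredundant[OF D(2)] D C0_in unfolding DP_lit_def resolvent_def occurrences_def by blast
  then show False using resolvent_irredundant[OF D(1)] D(3) by simp
qed

lemma ldeg_eq:
  "ldeg F y = card (occurrences untouched y) + (if y \<in> C0 then 1 else 0)
    + card (occurrences partners y)"
proof -
  let ?U = "occurrences untouched y" and ?C = "occurrences {C0} y" and ?P = "occurrences partners y"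
  have fin: "finite ?U" "finite ?C" "finite ?P"
    by (simp_all add: finite_occurrences finite_untouched finite_partners)
  have "C0 \<notin> untouched" "C0 \<notin> partners" "untouched \<inter> partners = {}"
    using x_in_C0 comp_x_notin_C0 unfolding occurrences_def by (auto simp: var_of_in_vars_iff)
  then have disj: "?U \<inter> ?C = {}" "(?U \<union> ?C) \<inter> ?P = {}" by (auto simp: occurrences_def)
  have "occurrences F y = ?U \<union> ?C \<union> ?P"
    unfolding occurrences_def using C0_in eq_C0 by (auto simp: var_of_in_vars_iff)
  then have "ldeg F y = card ?U + card ?C + card ?P"
    unfolding ldeg_eq_card_occurrences using fin disj by (simp add: card_Un_disjoint)
  moreover have "?C = (if y \<in> C0 then {C0} else {})" by (auto simp: occurrences_def)
  ultimately show ?thesis by simp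
qed

lemma ldeg_DP_lit_eq:
  assumes "var_of y \<noteq> var_of x"
  shows "ldeg (DP_lit x F) y = card (occurrences untouched y)
    + (if y \<in> C0 then card partners else card (occurrences partners y))"
proof -
  let ?U = "occurrences untouched y" and ?Q = "if y \<in> C0 then partners else occurrences partners y"
  have Q: "?Q \<subseteq> partners" using occurrences_subset[of partners y] by simp
  have fin: "finite ?U" "finite ?Q"
    by (simp_all add: finite_occurrences finite_untouched finite_partners)
  have "?U \<inter> resolvent ` ?Q \<subseteq> untouched \<inter> resolvent ` partners"
    by (rule Int_mono[OF occurrences_subset image_mono[OF Q]])
  then have disj: "?U \<inter> resolvent ` ?Q = {}" using untouched_resolvents_disjoint by simp
  have "y \<noteq> x" "y \<noteq> comp x" using assms by auto
  then have "y \<in> resolvent D \<longleftrightarrow> y \<in> C0 \<or> y \<in> D" for D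
    unfolding resolvent_def by blast
  then have "occurrences (DP_lit x F) y = ?U \<union> resolvent ` ?Q"
    unfolding DP_lit_eq occurrences_Un by (auto simp: occurrences_def)
  moreover have "card (resolvent ` ?Q) = card ?Q"
    by (rule card_image[OF inj_on_subset[OF inj_on_resolvent Q]])
  ultimately have "ldeg (DP_lit x F) y = card ?U + card ?Q"
    unfolding ldeg_eq_card_occurrences using fin disj by (simp add: card_Un_disjoint)
  then show ?thesis by simp
qed

lemma ldeg_DP_lit_var_x:
  assumes "var_of y = var_of x"
  shows "ldeg (DP_lit x F) y = 0"
proof -
  have "y = x \<or> y = comp x" using assms by (simp add: var_of_eq_iff)
  then have "occurrences (DP_lit x F) y = {}"
    unfolding DP_lit_eq occurrences_def resolvent_def by (auto simp: var_of_in_vars_iff)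
  then show ?thesis by (simp add: ldeg_eq_card_occurrences)
qed

end

lemma singular_iff_lit: "var_of y \<in> var_s F \<longleftrightarrow> min (ldeg F y) (ldeg F (comp y)) = 1"
  by (cases y) (auto simp: var_s_def singular_def min.commute)

lemma var_1s_iff_lit: "var_of y \<in> var_1s F \<longleftrightarrow> ldeg F y = 1 \<and> ldeg F (comp y) = 1"
  by (cases y) (auto simp: var_1s_def)

context singular_literal
begin

abbreviation F' :: "'v cls" where
  "F' \<equiv> DP_lit x F"

lemma ldeg_DP_lit_cases:
  assumes "w \<noteq> var_of x"
  obtains y where "var_of y = w" "ldeg F' (comp y) = ldeg F (comp y)" "ldeg F' y = ldeg F y"
  | y a b where "var_of y = w" "ldeg F' (comp y) = ldeg F (comp y)"
      "b \<le> card partners" "ldeg F y = a + 1 + b" "ldeg F' y = a + card partners"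
proof -
  have unchanged: "ldeg F' y = ldeg F y" if "var_of y = w" "y \<notin> C0" for y
    using ldeg_eq ldeg_DP_lit_eq that assms by auto
  have grown: "\<exists>a b. b \<le> card partners \<and> ldeg F y = a + 1 + b \<and> ldeg F' y = a + card partners"
    if "var_of y = w" "y \<in> C0" for y
    using ldeg_eq ldeg_DP_lit_eq that assms card_mono[OF finite_partners occurrences_subset]
    by fastforce
  show ?thesis
  proof (cases "\<exists>y. var_of y = w \<and> y \<in> C0")
    case True
    then obtain y where "var_of y = w" "y \<in> C0" by blast
    moreover have "comp y \<notin> C0" using clause_set_no_complement[OF clause_set C0_in] \<open>y \<in> C0\<close> .
    ultimately show ?thesis using that(2) unchanged grown by (metis var_of_comp)
  next
    case False
    then show ?thesis using that(1)[of "Pos w"] unchanged by force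
  qed
qed

lemma ldeg_comp_x: "ldeg F (comp x) = card partners"
  by (simp add: ldeg_eq_card_occurrences)

lemma var_x_notin_var_s_DP_lit: "var_of x \<notin> var_s F'"
  and var_x_notin_var_1s_DP_lit: "var_of x \<notin> var_1s F'"
  using ldeg_DP_lit_var_x by (simp_all add: singular_iff_lit var_1s_iff_lit)

lemma var_s_DP_lit_subset: "2 \<le> card partners \<Longrightarrow> var_s F' \<subseteq> var_s F"
proof
  fix w assume "2 \<le> card partners" "w \<in> var_s F'"
  then have "w \<noteq> var_of x" using var_x_notin_var_s_DP_lit by blast
  then show "w \<in> var_s F"
    by (rule ldeg_DP_lit_cases) (use \<open>2 \<le> card partners\<close> \<open>w \<in> var_s F'\<close> in
        \<open>auto simp: singular_iff_lit min_def split: if_splits\<close>)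
qed

lemma var_1s_DP_lit_subset: "2 \<le> card partners \<Longrightarrow> var_1s F' \<subseteq> var_1s F"
proof
  fix w assume "2 \<le> card partners" "w \<in> var_1s F'"
  then have "w \<noteq> var_of x" using var_x_notin_var_1s_DP_lit by blast
  then show "w \<in> var_1s F"
    by (rule ldeg_DP_lit_cases) (use \<open>2 \<le> card partners\<close> \<open>w \<in> var_1s F'\<close> in
        \<open>auto simp: var_1s_iff_lit\<close>)
qed

lemma var_1s_DP_lit_new: "card partners = 1 \<Longrightarrow> var_1s F' - var_1s F \<subseteq> var_n1s F"
proof
  fix w assume "card partners = 1" "w \<in> var_1s F' - var_1s F"
  then have "w \<noteq> var_of x" using var_x_notin_var_1s_DP_lit by blast
  then show "w \<in> var_n1s F"
    by (rule ldeg_DP_lit_cases) (use \<open>card partners = 1\<close> \<open>w \<in> var_1s F' - var_1s F\<close> in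
        \<open>auto simp: var_n1s_def singular_iff_lit var_1s_iff_lit\<close>)
qed

lemma var_s_subset_DP_lit: "card partners = 1 \<Longrightarrow> var_s F - {var_of x} \<subseteq> var_s F'"
proof
  fix w assume "card partners = 1" "w \<in> var_s F - {var_of x}"
  then have "w \<noteq> var_of x" by blast
  then show "w \<in> var_s F'"
    by (rule ldeg_DP_lit_cases) (use \<open>card partners = 1\<close> \<open>w \<in> var_s F - {var_of x}\<close> in
        \<open>auto simp: singular_iff_lit min_def split: if_splits\<close>)
qed

lemma var_1s_subset_DP_lit: "card partners = 1 \<Longrightarrow> var_1s F - {var_of x} \<subseteq> var_1s F'"
proof
  fix w assume "card partners = 1" "w \<in> var_1s F - {var_of x}"
  then have "w \<noteq> var_of x" by blast
  then show "w \<in> var_1s F'"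
    by (rule ldeg_DP_lit_cases) (use \<open>card partners = 1\<close> \<open>w \<in> var_1s F - {var_of x}\<close> in
        \<open>auto simp: var_1s_iff_lit\<close>)
qed

lemma var_s_lost_non_1s: "2 \<le> card partners \<Longrightarrow> var_s F - var_s F' \<subseteq> var_n1s F"
proof
  fix w assume "2 \<le> card partners" "w \<in> var_s F - var_s F'"
  show "w \<in> var_n1s F"
  proof (cases "w = var_of x")
    case True
    then show ?thesis using \<open>w \<in> var_s F - var_s F'\<close> \<open>2 \<le> card partners\<close> ldeg_comp_x
      by (auto simp: var_n1s_def var_1s_iff_lit)
  next
    case False
    then show ?thesis
      by (rule ldeg_DP_lit_cases) (use \<open>2 \<le> card partners\<close> \<open>w \<in> var_s F - var_s F'\<close> in
          \<open>auto simp: var_n1s_def singular_iff_lit var_1s_iff_lit min_def split: if_splits\<close>)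
  qed
qed

end

lemma m_singular_obtain_lit:
  assumes "m_singular m F v"
  obtains x where "var_of x = v" "ldeg F x = 1" "ldeg F (comp x) = m"
proof (cases "ldeg F (Pos v) = 1")
  case True
  then show ?thesis using assms that[of "Pos v"] by (simp add: m_singular_def vdeg_def)
next
  case False
  then show ?thesis using assms that[of "Neg v"]
    by (auto simp: m_singular_def singular_def vdeg_def min_def split: if_splits)
qed

theorem corollary25:
  fixes F :: "'v cls" and v :: 'v and m :: nat
  assumes "minimally_unsat F"
    and "m_singular m F v" and "m \<ge> 1"
  shows "(m \<ge> 2 \<longrightarrow> var_s (DP v F) \<subseteq> var_s F \<and> var_1s (DP v F) \<subseteq> var_1s F)
       \<and> (m = 1 \<longrightarrow> var_1s (DP v F) - var_1s F \<subseteq> var_n1s F)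
       \<and> (m = 1 \<longrightarrow> var_s F - {v} \<subseteq> var_s (DP v F) \<and> var_1s F - {v} \<subseteq> var_1s (DP v F))
       \<and> (m \<ge> 2 \<longrightarrow> var_s F - var_s (DP v F) \<subseteq> var_n1s F)"
proof -
  obtain x where x: "var_of x = v" "ldeg F x = 1" "ldeg F (comp x) = m"
    using m_singular_obtain_lit[OF assms(2)] .
  then obtain C0 where "occurrences F x = {C0}"
    by (metis ldeg_eq_card_occurrences card_1_singletonE)
  with assms(1) interpret singular_literal F x C0
    by unfold_locales
  have m: "m = card partners" using ldeg_comp_x x(3) by simp
  show ?thesis
    unfolding DP_eq_DP_lit[OF x(1)] m unfolding x(1)[symmetric]
    using var_s_DP_lit_subset var_1s_DP_lit_subset var_1s_DP_lit_new var_s_subset_DP_lit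
      var_1s_subset_DP_lit var_s_lost_non_1s
    by blast
qed

end
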